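(* Fix an integer $n\ge1$. Let $M$ be a $2\times2$ matrix-valued function satisfying all conditions of the model problem described in the context except that condition (2) is replaced by the requirement that $M$ is holomorphic in a neighbourhood of $p\equiv0\bmod\Lambda_\tau$. Then $M\equiv0$.
   Context: Let $\tau\in i\mathbb{R}_{>0}$, $\Lambda_\tau=\mathbb{Z}+\tau\mathbb{Z}$, and fix $\mathscr D\in(0,1)$. For $p$ on a line $\{\mathrm{Im}\,p=(k+\tfrac12)\mathrm{Im}\,\tau\}$, $p_\pm$ denote boundary values from above/below. Model problem (for given $n$): a $2\times2$ matrix-valued function $M$ on $\mathbb{C}\setminus\bigcup_{k\in\mathbb Z}\{\mathrm{Im}\,p=(k+\tfrac12)\mathrm{Im}\,\tau\}$, meromorphic there, such that: (1) $M(p+1)=(-1)^{n-1}M(p)$, $M(p+\tau)=M(p)$; (2) near $p\equiv0\bmod\Lambda_\tau$, $M(p)=\begin{bmatrix}p^{-1}+\mathcal O(1)&\mathcal O(1)\\\mathcal O(1)&p^{-1}+\mathcal O(1)\end{bmatrix}$; (3) near $p\equiv\mathscr D\bmod\Lambda_\tau$ the first column is $\mathcal O((p-\mathscr D)^{-1})$ and the second column is $\mathcal O(p-\mathscr D)$; (4) no other poles; (5) continuous boundary values on the lines with $M(p_+)=M(p_-)\begin{bmatrix}0&1\\-1&0\end{bmatrix}$. *)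

theory Defs
  imports "HOL-Complex_Analysis.Complex_Analysis" "HOL-Library.Landau_Symbols"
begin

definition lattice :: "complex \<Rightarrow> complex set" where
  "lattice \<tau> = {of_int a + of_int b * \<tau> | a b. True}"

definition cuts :: "complex \<Rightarrow> complex set" where
  "cuts \<tau> = {p. \<exists>k::int. Im p = (of_int k + 1/2) * Im \<tau>}"

definition Jmat :: "complex^2^2" where
  "Jmat = (\<chi> i j. if i = 1 \<and> j = 2 then 1 else if i = 2 \<and> j = 1 then -1 else 0)"

end

theory Submission
  imports Defs "HOL-Library.Periodic_Fun"
begin

text \<open>
  Fix a row \<open>(u, v)\<close> of \<open>M\<close>. The jump condition reads \<open>u\<^sub>+ = - v\<^sub>-\<close>, \<open>v\<^sub>+ = u\<^sub>-\<close>.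

  If a function \<open>g\<close> with the periodicity of \<open>M\<close> and a removable singularity at \<open>D\<close> jumps by
  \<open>g\<^sub>+ = c g\<^sub>-\<close> with \<open>c\<^sup>m = 1 \<noteq> c\<close>, then \<open>g\<^sup>m\<close> extends to a doubly periodic entire function,
  hence is constant by Liouville; \<open>g\<close> is then constant on a pole-free rectangle whose top edge
  lies on a cut, and comparing both sides of that edge gives \<open>g = 0\<close>.

  Since \<open>u = O(1/(p - D))\<close> and \<open>v = O(p - D)\<close>, the product \<open>u v\<close> is bounded at \<open>D\<close> and jumps by
  \<open>-1\<close>, so \<open>u v = 0\<close>. If \<open>u\<close> had a pole at \<open>D\<close>, then \<open>v\<close> would vanish near \<open>D\<close>, hence on the
  strip \<open>|Im p| < Im \<tau> / 2\<close> and, by \<open>\<tau>\<close>-periodicity, on both sides of the cut \<open>Im p = Im \<tau> / 2\<close>;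
  by the jump condition the boundary values of \<open>u\<close> vanish there, so \<open>u\<close> vanishes between that cut
  and \<open>D\<close>, which is impossible near a pole. So \<open>u\<close> is bounded at \<open>D\<close>, and the first argument
  applied to \<open>u \<plusminus> i v\<close> (jump \<open>\<plusminus>i\<close>) gives \<open>u = v = 0\<close>.
\<close>

lemma not_Ints_between:
  fixes k x :: real
  assumes "k \<in> \<int>" "k < x" "x < k + 1"
  shows "x \<notin> \<int>"
  using Ints_nonzero_abs_ge1[of "x - k"] assms by auto

lemma Ints_eqI_dist_less_1:
  fixes x y :: real
  assumes "x \<in> \<int>" "y \<in> \<int>" "\<bar>x - y\<bar> < 1"
  shows "x = y"
  using Ints_nonzero_abs_ge1[of "x - y"] assms by auto

lemma mem_ball_abs_Re_Im_less:
  assumes "q \<in> ball x r"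
  shows "\<bar>Re q - Re x\<bar> < r" and "\<bar>Im q - Im x\<bar> < r"
  using assms abs_Re_le_cmod[of "x - q"] abs_Im_le_cmod[of "x - q"]
  by (auto simp: dist_norm abs_minus_commute)

lemma at_within_Im_gt_neq_bot: "at x within {p. Im p > Im x} \<noteq> bot"
proof -
  have "x islimpt {p. Im p > Im x}"
    unfolding islimpt_approachable
  proof (intro allI impI)
    fix e :: real
    assume "e > 0"
    then show "\<exists>y\<in>{p. Im p > Im x}. y \<noteq> x \<and> dist y x < e"
      by (intro bexI[of _ "x + \<i> * of_real (e/2)"]) (auto simp: dist_norm norm_mult)
  qed
  then show ?thesis
    by (simp add: trivial_limit_within)
qed

lemma at_within_Im_lt_neq_bot: "at x within {p. Im p < Im x} \<noteq> bot"
proof -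
  have "x islimpt {p. Im p < Im x}"
    unfolding islimpt_approachable
  proof (intro allI impI)
    fix e :: real
    assume "e > 0"
    then show "\<exists>y\<in>{p. Im p < Im x}. y \<noteq> x \<and> dist y x < e"
      by (intro bexI[of _ "x - \<i> * of_real (e/2)"]) (auto simp: dist_norm norm_mult)
  qed
  then show ?thesis
    by (simp add: trivial_limit_within)
qed

lemma isCont_paste_horizontal_line:
  fixes f g :: "complex \<Rightarrow> complex"
  assumes S: "open S" "x \<in> S" and x: "Im x = c"
    and contg: "continuous_on (S \<inter> {z. Im z = c}) g"
    and above: "(f \<longlongrightarrow> g x) (at x within {z. Im z > c})"
    and below: "(f \<longlongrightarrow> g x) (at x within {z. Im z < c})"
  shows "isCont (\<lambda>z. if Im z = c then g z else f z) x" (is "isCont ?F x")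
proof -
  have "(?F \<longlongrightarrow> g x) (at x within {z. Im z > c})"
    by (rule Lim_transform_eventually[OF above]) (auto simp: eventually_at_filter)
  moreover have "(?F \<longlongrightarrow> g x) (at x within {z. Im z < c})"
    by (rule Lim_transform_eventually[OF below]) (auto simp: eventually_at_filter)
  moreover have "(?F \<longlongrightarrow> g x) (at x within {z. Im z = c})"
  proof -
    have "(g \<longlongrightarrow> g x) (at x within S \<inter> {z. Im z = c})"
      using contg S x by (simp add: continuous_on_def)
    also have "at x within S \<inter> {z. Im z = c} = at x within {z. Im z = c}"
      using S by (intro at_within_nhd[of x S]) auto
    finally show ?thesis
      by (rule Lim_transform_eventually) (auto simp: eventually_at_filter)
  qed
  ultimately have "(?F \<longlongrightarrow> g x) (at x within {z. Im z > c} \<union> {z. Im z < c} \<union> {z. Im z = c})"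
    by (simp add: Lim_within_Un)
  moreover have "{z. Im z > c} \<union> {z. Im z < c} \<union> {z. Im z = c} = UNIV"
    by auto
  ultimately show ?thesis
    using x by (simp add: isCont_def)
qed

lemma holomorphic_on_paste_horizontal_line:
  fixes f g :: "complex \<Rightarrow> complex"
  assumes S: "open S"
    and holf: "f holomorphic_on S - {z. Im z = c}"
    and contg: "continuous_on (S \<inter> {z. Im z = c}) g"
    and above: "\<And>x. x \<in> S \<Longrightarrow> Im x = c \<Longrightarrow> (f \<longlongrightarrow> g x) (at x within {z. Im z > c})"
    and below: "\<And>x. x \<in> S \<Longrightarrow> Im x = c \<Longrightarrow> (f \<longlongrightarrow> g x) (at x within {z. Im z < c})"
  shows "(\<lambda>z. if Im z = c then g z else f z) holomorphic_on S" (is "?F holomorphic_on S")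
proof (rule holomorphic_on_paste_across_line[OF S, where d = \<i> and k = c])
  have off_line: "?F holomorphic_on S \<inter> T" if "T \<inter> {z. Im z = c} = {}" for T
    by (rule holomorphic_transform[OF holomorphic_on_subset[OF holf]]) (use that in auto)
  show "?F holomorphic_on S \<inter> {z. \<i> \<bullet> z < c}" "?F holomorphic_on S \<inter> {z. c < \<i> \<bullet> z}"
    by (auto intro!: off_line)
  have open_off_line: "open (S - {z. Im z = c})"
    using S by (intro open_Diff closed_Collect_eq continuous_intros)
  show "continuous_on S ?F"
    unfolding continuous_on_eq_continuous_at[OF S]
  proof
    fix x
    assume x: "x \<in> S"
    show "isCont ?F x"
    proof (cases "Im x = c")
      case True
      then show ?thesis
        using x by (intro isCont_paste_horizontal_line[OF S x True contg above below])
    next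
      case False
      have "isCont f x"
        using holomorphic_on_imp_continuous_on[OF holf] open_off_line x False
        by (simp add: continuous_on_eq_continuous_at)
      moreover have "eventually (\<lambda>z. z \<in> S - {z. Im z = c}) (nhds x)"
        using open_off_line x False by (intro eventually_nhds_in_open) auto
      then have "eventually (\<lambda>z. f z = ?F z) (nhds x)"
        by eventually_elim auto
      ultimately show ?thesis
        by (simp add: isCont_cong)
    qed
  qed
qed simp

lemma tendsto_if_bigo_1_at_isolated_singularity:
  fixes f :: "complex \<Rightarrow> complex"
  assumes holf: "f holomorphic_on ball z r - {z}" and r: "0 < r"
    and bounded: "f \<in> O[at z](\<lambda>_. 1)"
  obtains l where "f \<midarrow>z\<rightarrow> l"
proof -
  obtain c where "eventually (\<lambda>w. norm (f w) \<le> c * norm (1::complex)) (at z)"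
    using bounded by (elim landau_o.bigE)
  then have "\<exists>B. eventually (\<lambda>w. norm (f w) \<le> B) (at z)"
    by auto
  then obtain g where g: "g holomorphic_on ball z r" "\<And>w. w \<in> ball z r - {z} \<Longrightarrow> g w = f w"
    using holomorphic_on_extend_bounded[OF holf] r by auto
  have "g \<midarrow>z\<rightarrow> g z"
    using holomorphic_on_imp_continuous_on[OF g(1)] r
    by (simp add: continuous_on_eq_continuous_at isCont_def)
  then have "f \<midarrow>z\<rightarrow> g z"
    by (rule Lim_transform_within_open[where s = "ball z r"]) (use r g(2) in auto)
  then show thesis ..
qed

lemma not_essential_if_bigo_inverse:
  fixes f :: "complex \<Rightarrow> complex"
  assumes holf: "f holomorphic_on ball z r - {z}" and r: "0 < r"
    and pole: "f \<in> O[at z](\<lambda>w. 1 / (w - z))"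
  shows "not_essential f z"
proof -
  have "(\<lambda>w. (w - z) * f w) \<in> O[at z](\<lambda>w. (w - z) * (1 / (w - z)))"
    by (intro landau_o.big_mult landau_o.big_refl pole)
  also have "O[at z](\<lambda>w. (w - z) * (1 / (w - z))) = O[at z](\<lambda>_. 1)"
    by (intro landau_o.big.cong) (auto simp: eventually_at_filter)
  finally have bounded: "(\<lambda>w. (w - z) * f w) \<in> O[at z](\<lambda>_. 1)" .
  have "(\<lambda>w. (w - z) * f w) holomorphic_on ball z r - {z}"
    using holf by (intro holomorphic_intros)
  then obtain l where l: "(\<lambda>w. (w - z) * f w) \<midarrow>z\<rightarrow> l"
    using r bounded by (rule tendsto_if_bigo_1_at_isolated_singularity)
  have iso: "isolated_singularity_at (\<lambda>w. (w - z) * f w) z" "isolated_singularity_at (\<lambda>w. w - z) z"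
    using holf r by (auto intro!: isolated_singularity_at_holomorphic[of _ "ball z r"] holomorphic_intros)
  have "not_essential (\<lambda>w. ((w - z) * f w) / (w - z)) z"
    using l iso by (intro not_essential_divide tendsto_imp_not_essential not_essential_holomorphic[of _ UNIV])
      (auto intro: holomorphic_intros)
  then show ?thesis
    by (rule not_essential_transform) (auto simp: eventually_at_filter)
qed

lemma entire_doubly_periodic_imp_constant:
  fixes f :: "complex \<Rightarrow> complex"
  assumes holf: "f holomorphic_on UNIV" and \<omega>: "Im \<omega> \<noteq> 0"
    and per_1: "\<And>z. f (z + 1) = f z" and per_\<omega>: "\<And>z. f (z + \<omega>) = f z"
  shows "f constant_on UNIV"
proof -
  interpret one: periodic_fun_simple f 1
    by unfold_locales (rule per_1)
  interpret omega: periodic_fun_simple f \<omega>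
    by unfold_locales (rule per_\<omega>)
  define \<phi> where "\<phi> t = of_real (fst t) + of_real (snd t) * \<omega>" for t :: "real \<times> real"
  define K where "K = \<phi> ` ({0..1} \<times> {0..1})"
  have "compact K"
    unfolding K_def \<phi>_def by (intro compact_continuous_image compact_Times compact_Icc continuous_intros)
  then have "bounded (f ` K)"
    using holomorphic_on_imp_continuous_on[OF holf]
    by (intro compact_imp_bounded compact_continuous_image) (auto intro: continuous_on_subset)
  moreover have "f z \<in> f ` K" for z
  proof -
    define b where "b = Im z / Im \<omega>"
    define a where "a = Re z - b * Re \<omega>"
    have "z = (\<phi> (frac a, frac b) + of_int \<lfloor>a\<rfloor> * 1) + of_int \<lfloor>b\<rfloor> * \<omega>"
      using \<omega> by (simp add: \<phi>_def frac_def complex_eq_iff a_def b_def field_simps)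
    then have "f z = f (\<phi> (frac a, frac b))"
      by (metis one.plus_of_int omega.plus_of_int)
    moreover have "(frac a, frac b) \<in> {0..1} \<times> {0..1}"
      by (simp add: less_imp_le[OF frac_lt_1])
    ultimately show ?thesis
      unfolding K_def by blast
  qed
  ultimately have "bounded (range f)"
    by (meson bounded_subset image_subsetI)
  then show ?thesis
    by (rule Liouville_theorem[OF holf])
qed

lemma zero_in_lattice: "0 \<in> lattice \<tau>"
  unfolding lattice_def by (rule CollectI, rule exI[of _ 0], rule exI[of _ 0]) simp

lemma one_in_lattice: "1 \<in> lattice \<tau>"
  unfolding lattice_def by (rule CollectI, rule exI[of _ 1], rule exI[of _ 0]) simp

lemma tau_in_lattice: "\<tau> \<in> lattice \<tau>"
  unfolding lattice_def by (rule CollectI, rule exI[of _ 0], rule exI[of _ 1]) simp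

lemma uminus_in_lattice:
  assumes "w \<in> lattice \<tau>"
  shows "- w \<in> lattice \<tau>"
proof -
  obtain a b :: int where "w = of_int a + of_int b * \<tau>"
    using assms by (auto simp: lattice_def)
  then have "- w = of_int (- a) + of_int (- b) * \<tau>"
    by simp
  then show ?thesis
    unfolding lattice_def by blast
qed

definition has_boundary_values ::
    "complex set \<Rightarrow> (complex \<Rightarrow> 'a::topological_space) \<Rightarrow> (complex \<Rightarrow> 'a) \<Rightarrow> (complex \<Rightarrow> 'a) \<Rightarrow> bool"
  where "has_boundary_values L f fp fm \<longleftrightarrow>
    continuous_on L fp \<and> continuous_on L fm \<and>
    (\<forall>x\<in>L. (f \<longlongrightarrow> fp x) (at x within {p. Im p > Im x}) \<and> (f \<longlongrightarrow> fm x) (at x within {p. Im p < Im x}))"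

lemma has_boundary_values_const: "has_boundary_values L (\<lambda>_. c) (\<lambda>_. c) (\<lambda>_. c)"
  by (simp add: has_boundary_values_def)

lemma has_boundary_values_add:
  fixes f g :: "complex \<Rightarrow> complex"
  assumes "has_boundary_values L f fp fm" "has_boundary_values L g gp gm"
  shows "has_boundary_values L (\<lambda>p. f p + g p) (\<lambda>x. fp x + gp x) (\<lambda>x. fm x + gm x)"
  using assms by (auto simp: has_boundary_values_def intro!: tendsto_add continuous_on_add)

lemma has_boundary_values_mult:
  fixes f g :: "complex \<Rightarrow> complex"
  assumes "has_boundary_values L f fp fm" "has_boundary_values L g gp gm"
  shows "has_boundary_values L (\<lambda>p. f p * g p) (\<lambda>x. fp x * gp x) (\<lambda>x. fm x * gm x)"
  using assms by (auto simp: has_boundary_values_def intro!: tendsto_mult continuous_on_mult)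

lemma has_boundary_values_power:
  fixes f :: "complex \<Rightarrow> complex"
  assumes "has_boundary_values L f fp fm"
  shows "has_boundary_values L (\<lambda>p. f p ^ m) (\<lambda>x. fp x ^ m) (\<lambda>x. fm x ^ m)"
  using assms by (auto simp: has_boundary_values_def intro!: tendsto_power continuous_on_power)

lemma has_boundary_values_matrix_entry:
  fixes M :: "complex \<Rightarrow> 'a::real_normed_vector ^'n ^'m"
  assumes "has_boundary_values L M Mp Mm"
  shows "has_boundary_values L (\<lambda>p. M p $ i $ j) (\<lambda>x. Mp x $ i $ j) (\<lambda>x. Mm x $ i $ j)"
  using assms by (auto simp: has_boundary_values_def intro!: tendsto_vec_nth continuous_on_component)

lemma has_boundary_values_eqI:
  fixes f fp fm :: "complex \<Rightarrow> 'a::t2_space"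
  assumes "has_boundary_values L f fp fm" and "x \<in> L"
  shows "eventually (\<lambda>q. f q = a) (at x within {q. Im q > Im x}) \<Longrightarrow> fp x = a"
    and "eventually (\<lambda>q. f q = a) (at x within {q. Im q < Im x}) \<Longrightarrow> fm x = a"
proof -
  have lim: "(f \<longlongrightarrow> fp x) (at x within {q. Im q > Im x})" "(f \<longlongrightarrow> fm x) (at x within {q. Im q < Im x})"
    using assms by (auto simp: has_boundary_values_def)
  show "fp x = a" if "eventually (\<lambda>q. f q = a) (at x within {q. Im q > Im x})"
    by (rule tendsto_unique[OF at_within_Im_gt_neq_bot lim(1) tendsto_eventually[OF that]])
  show "fm x = a" if "eventually (\<lambda>q. f q = a) (at x within {q. Im q < Im x})"
    by (rule tendsto_unique[OF at_within_Im_lt_neq_bot lim(2) tendsto_eventually[OF that]])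
qed

locale cut_lattice =
  fixes \<tau> :: complex and D :: real
  assumes Re_tau: "Re \<tau> = 0" and Im_tau_pos: "Im \<tau> > 0"
begin

abbreviation "h \<equiv> Im \<tau>"
abbreviation "C \<equiv> cuts \<tau>"
definition poles :: "complex set" where "poles = (\<lambda>w. complex_of_real D + w) ` lattice \<tau>"

lemma mem_C_iff: "p \<in> C \<longleftrightarrow> Im p / h - 1/2 \<in> \<int>"
proof -
  have "Im p = (of_int k + 1/2) * h \<longleftrightarrow> Im p / h - 1/2 = of_int k" for k :: int
    using Im_tau_pos by (auto simp: field_simps)
  then show ?thesis
    by (auto simp: cuts_def Ints_def)
qed

lemma mem_poles_iff: "p \<in> poles \<longleftrightarrow> Re p - D \<in> \<int> \<and> Im p / h \<in> \<int>"
proof -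
  have "p \<in> poles \<longleftrightarrow> (\<exists>a b :: int. p = of_real D + (of_int a + of_int b * \<tau>))"
    by (auto simp: poles_def lattice_def)
  also have "\<dots> \<longleftrightarrow> (\<exists>a b :: int. Re p - D = of_int a \<and> Im p / h = of_int b)"
    using Re_tau Im_tau_pos by (auto simp: complex_eq_iff field_simps)
  also have "\<dots> \<longleftrightarrow> Re p - D \<in> \<int> \<and> Im p / h \<in> \<int>"
    by (auto simp: Ints_def)
  finally show ?thesis .
qed

lemma closed_C: "closed C"
proof -
  have "closed ((\<lambda>p. Im p / h - 1/2) -` \<int>)"
    using Im_tau_pos by (intro closed_vimage closed_Ints continuous_intros) auto
  moreover have "C = (\<lambda>p. Im p / h - 1/2) -` \<int>"
    by (auto simp: mem_C_iff)
  ultimately show ?thesis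
    by simp
qed

lemma open_off_cuts_and_poles: "open (- C - poles)"
proof -
  have "closed ((\<lambda>p. Re p - D) -` \<int> \<inter> (\<lambda>p. Im p / h) -` \<int>)"
    using Im_tau_pos by (intro closed_Int closed_vimage closed_Ints continuous_intros) auto
  moreover have "poles = (\<lambda>p. Re p - D) -` \<int> \<inter> (\<lambda>p. Im p / h) -` \<int>"
    unfolding set_eq_iff mem_poles_iff by simp
  ultimately show ?thesis
    using closed_C by (simp add: open_Diff open_Compl)
qed

lemma lattice_translate_iff:
  assumes "w \<in> lattice \<tau>"
  shows "p + w \<in> C \<longleftrightarrow> p \<in> C" and "p + w \<in> poles \<longleftrightarrow> p \<in> poles"
proof -
  obtain a b :: int where w: "w = of_int a + of_int b * \<tau>"
    using assms by (auto simp: lattice_def)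
  have "Im (p + w) / h - 1/2 = (Im p / h - 1/2) + of_int b"
    and "Im (p + w) / h = Im p / h + of_int b"
    and "Re (p + w) - D = (Re p - D) + of_int a"
    using Re_tau Im_tau_pos by (simp_all add: w field_simps)
  then show "p + w \<in> C \<longleftrightarrow> p \<in> C" and "p + w \<in> poles \<longleftrightarrow> p \<in> poles"
    by (simp_all only: mem_C_iff mem_poles_iff add_in_Ints_iff_right[OF Ints_of_int])
qed

lemma Im_div_h_bounds:
  assumes "\<bar>Im y - Im x\<bar> < h/2"
  shows "Im x / h - 1/2 < Im y / h" and "Im y / h < Im x / h + 1/2"
proof -
  have "Im x - h/2 < Im y" "Im y < Im x + h/2"
    using assms by arith+
  then have "(Im x - h/2) / h < Im y / h" "Im y / h < (Im x + h/2) / h"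
    using Im_tau_pos by (auto intro: divide_strict_right_mono)
  then show "Im x / h - 1/2 < Im y / h" "Im y / h < Im x / h + 1/2"
    using Im_tau_pos by (simp_all add: diff_divide_distrib add_divide_distrib)
qed

lemma ball_around_cut:
  assumes x: "x \<in> C" and y: "y \<in> ball x (h/2)"
  shows "y \<notin> poles" and "y \<in> C \<longleftrightarrow> Im y = Im x"
proof -
  define k where "k = Im x / h - 1/2"
  have k: "k \<in> \<int>"
    using x by (simp add: k_def mem_C_iff)
  have lower: "k < Im y / h" and upper: "Im y / h < k + 1"
    using Im_div_h_bounds[OF mem_ball_abs_Re_Im_less(2)[OF y]] by (simp_all add: k_def)
  then show "y \<notin> poles"
    using not_Ints_between[OF k] by (auto simp: mem_poles_iff)
  show "y \<in> C \<longleftrightarrow> Im y = Im x"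
  proof
    assume "y \<in> C"
    then have "Im y / h - 1/2 = k"
      using lower upper k by (intro Ints_eqI_dist_less_1) (auto simp: mem_C_iff abs_less_iff)
    then show "Im y = Im x"
      using Im_tau_pos by (simp add: k_def field_simps)
  qed (use x in \<open>simp add: mem_C_iff\<close>)
qed

lemma poles_isolated:
  assumes z: "z \<in> poles"
  shows "z \<notin> C" and "ball z (min 1 h / 2) - {z} \<subseteq> - C - poles"
proof -
  have a: "Re z - D \<in> \<int>" and b: "Im z / h \<in> \<int>"
    using z by (auto simp: mem_poles_iff)
  have close: "\<bar>Re y - Re z\<bar> < 1/2" "Im z / h - 1/2 < Im y / h" "Im y / h < Im z / h + 1/2"
    if "y \<in> ball z (min 1 h / 2)" for y
  proof -
    have "min 1 h / 2 \<le> 1/2" "min 1 h / 2 \<le> h/2"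
      by auto
    then have "\<bar>Re y - Re z\<bar> < 1/2" "\<bar>Im y - Im z\<bar> < h/2"
      using mem_ball_abs_Re_Im_less[OF that] by linarith+
    then show "\<bar>Re y - Re z\<bar> < 1/2" "Im z / h - 1/2 < Im y / h" "Im y / h < Im z / h + 1/2"
      using Im_div_h_bounds by auto
  qed
  have not_C: "y \<notin> C" if "y \<in> ball z (min 1 h / 2)" for y
    using close[OF that] not_Ints_between[of "Im z / h - 1" "Im y / h - 1/2"] b
    by (auto simp: mem_C_iff)
  then show "z \<notin> C"
    using Im_tau_pos by simp
  have "y = z" if "y \<in> ball z (min 1 h / 2)" "y \<in> poles" for y
  proof -
    have a': "Re y - D \<in> \<int>" and b': "Im y / h \<in> \<int>"
      using that(2) by (auto simp: mem_poles_iff)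
    have "\<bar>(Re y - D) - (Re z - D)\<bar> < 1" "\<bar>Im y / h - Im z / h\<bar> < 1"
      using close[OF that(1)] by arith+
    then have "Re y - D = Re z - D" "Im y / h = Im z / h"
      using Ints_eqI_dist_less_1[OF a' a] Ints_eqI_dist_less_1[OF b' b] by blast+
    then show ?thesis
      using Im_tau_pos by (simp add: complex_eq_iff)
  qed
  with not_C show "ball z (min 1 h / 2) - {z} \<subseteq> - C - poles"
    by blast
qed

lemma not_cut_if_Im_between:
  assumes "- (h/2) < Im q" "Im q < h/2"
  shows "q \<notin> C"
proof -
  have "- 1 < Im q / h - 1/2" "Im q / h - 1/2 < 0"
    using assms Im_tau_pos by (simp_all add: field_simps)
  then show ?thesis
    using not_Ints_between[of "- 1" "Im q / h - 1/2"] by (simp add: mem_C_iff)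
qed

lemma lattice_periodic:
  fixes f :: "complex \<Rightarrow> 'a"
  assumes per_1: "\<And>p. p \<notin> C \<Longrightarrow> f (p + 1) = f p" and per_\<tau>: "\<And>p. p \<notin> C \<Longrightarrow> f (p + \<tau>) = f p"
    and w: "w \<in> lattice \<tau>" and p: "p \<notin> C"
  shows "f (p + w) = f p"
proof -
  \<comment> \<open>The cuts are invariant under the lattice, so masking them makes \<open>g\<close> periodic on the whole plane.\<close>
  define g where "g q = (if q \<in> C then undefined else f q)" for q
  interpret one: periodic_fun_simple g 1
    by unfold_locales (simp add: g_def per_1 lattice_translate_iff one_in_lattice)
  interpret tau: periodic_fun_simple g \<tau>
    by unfold_locales (simp add: g_def per_\<tau> lattice_translate_iff tau_in_lattice)
  obtain a b :: int where w_eq: "w = of_int a + of_int b * \<tau>"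
    using w by (auto simp: lattice_def)
  have "g (p + w) = g p"
    using one.plus_of_int[of p a] tau.plus_of_int[of "p + of_int a * 1" b] by (simp add: w_eq add.assoc)
  then show ?thesis
    using p by (simp add: g_def lattice_translate_iff[OF w])
qed

lemma tendsto_at_poles:
  assumes per_1: "\<And>p. p \<notin> C \<Longrightarrow> f (p + 1) = f p" and per_\<tau>: "\<And>p. p \<notin> C \<Longrightarrow> f (p + \<tau>) = f p"
    and lim: "(f \<longlongrightarrow> l) (at (of_real D))" and z: "z \<in> poles"
  shows "(f \<longlongrightarrow> l) (at z)"
proof -
  obtain w where w: "w \<in> lattice \<tau>" "z = of_real D + w"
    using z by (auto simp: poles_def)
  have "((\<lambda>q. f (q + - w)) \<longlongrightarrow> l) (at (of_real D - - w))"
    by (rule LIM_offset[OF lim])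
  then have shifted: "((\<lambda>q. f (q - w)) \<longlongrightarrow> l) (at z)"
    using w by simp
  have "eventually (\<lambda>q. q \<in> - C) (at z)"
    using closed_C poles_isolated(1)[OF z] by (intro eventually_at_in_open') auto
  moreover have "f (q - w) = f q" if "q \<in> - C" for q
    using lattice_periodic[where f = f and p = q, OF per_1 per_\<tau> uminus_in_lattice[OF w(1)]] that
    by simp
  ultimately have "eventually (\<lambda>q. f (q - w) = f q) (at z)"
    by (auto elim: eventually_mono)
  then show ?thesis
    by (rule Lim_transform_eventually[OF shifted])
qed

lemma holomorphic_on_ball_across_cut:
  fixes f g :: "complex \<Rightarrow> complex"
  assumes holf: "f holomorphic_on - C - poles" and x: "x \<in> C" and contg: "continuous_on C g"
    and lim: "\<And>y. y \<in> C \<Longrightarrow> Im y = Im x \<Longrightarrow>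
      (f \<longlongrightarrow> g y) (at y within {p. Im p > Im y}) \<and> (f \<longlongrightarrow> g y) (at y within {p. Im p < Im y})"
  shows "(\<lambda>q. if q \<in> C then g q else f q) holomorphic_on ball x (h/2)"
proof -
  have cut: "y \<in> C \<longleftrightarrow> Im y = Im x" and not_pole: "y \<notin> poles" if "y \<in> ball x (h/2)" for y
    using ball_around_cut[OF x that] by auto
  have "(\<lambda>q. if Im q = Im x then g q else f q) holomorphic_on ball x (h/2)"
  proof (rule holomorphic_on_paste_horizontal_line)
    show "f holomorphic_on ball x (h/2) - {q. Im q = Im x}"
      by (rule holomorphic_on_subset[OF holf]) (use cut not_pole in blast)
    show "continuous_on (ball x (h/2) \<inter> {q. Im q = Im x}) g"
      by (rule continuous_on_subset[OF contg]) (use cut in auto)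
  qed (use cut lim in auto)
  then show ?thesis
    by (rule holomorphic_transform) (use cut in auto)
qed

lemma holomorphic_extension_across_cuts_and_poles:
  fixes f fb :: "complex \<Rightarrow> complex"
  assumes holf: "f holomorphic_on - C - poles"
    and bv: "has_boundary_values C f fb fb"
    and lim: "\<And>z. z \<in> poles \<Longrightarrow> (f \<longlongrightarrow> l) (at z)"
  shows "(\<lambda>p. if p \<in> C then fb p else if p \<in> poles then l else f p) holomorphic_on UNIV"
    (is "?F holomorphic_on UNIV")
proof -
  have local: "\<exists>N. open N \<and> x \<in> N \<and> ?F holomorphic_on N" for x
  proof (cases "x \<in> C")
    case True
    have "(\<lambda>q. if q \<in> C then fb q else f q) holomorphic_on ball x (h/2)"
      using bv by (intro holomorphic_on_ball_across_cut[OF holf True]) (auto simp: has_boundary_values_def)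
    then have "?F holomorphic_on ball x (h/2)"
      by (rule holomorphic_transform) (use ball_around_cut(1)[OF True] in auto)
    then show ?thesis
      using Im_tau_pos by (intro exI[of _ "ball x (h/2)"]) auto
  next
    case not_cut: False
    show ?thesis
    proof (cases "x \<in> poles")
      case True
      define r where "r = min 1 h / 2"
      have punctured: "ball x r - {x} \<subseteq> - C - poles"
        using poles_isolated(2)[OF True] by (simp add: r_def)
      have "(\<lambda>q. if q = x then l else f q) holomorphic_on ball x r"
        by (rule removable_singularity[OF holomorphic_on_subset[OF holf punctured]]) (use lim True in auto)
      then have "?F holomorphic_on ball x r"
        by (rule holomorphic_transform) (use punctured not_cut True in auto)
      then show ?thesis
        using Im_tau_pos by (intro exI[of _ "ball x r"]) (auto simp: r_def)
    next
      case False
      have "?F holomorphic_on - C - poles"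
        by (rule holomorphic_transform[OF holf]) auto
      then show ?thesis
        using open_off_cuts_and_poles not_cut False by blast
    qed
  qed
  have "?F field_differentiable (at x)" for x
    using local[of x] holomorphic_on_imp_differentiable_at by blast
  then show ?thesis
    by (simp add: holomorphic_on_def)
qed

lemma constant_if_periodic_without_jump:
  fixes f fp fm :: "complex \<Rightarrow> complex"
  assumes holf: "f holomorphic_on - C - poles"
    and per_1: "\<And>p. p \<notin> C \<Longrightarrow> f (p + 1) = f p" and per_\<tau>: "\<And>p. p \<notin> C \<Longrightarrow> f (p + \<tau>) = f p"
    and lim: "(f \<longlongrightarrow> l) (at (of_real D))"
    and bv: "has_boundary_values C f fp fm" and no_jump: "\<And>x. x \<in> C \<Longrightarrow> fp x = fm x"
  obtains k where "\<And>p. p \<notin> C \<Longrightarrow> p \<notin> poles \<Longrightarrow> f p = k"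
proof -
  define F where "F = (\<lambda>p. if p \<in> C then fm p else if p \<in> poles then l else f p)"
  have off: "F p = f p" if "p \<notin> C" "p \<notin> poles" for p
    using that by (simp add: F_def)
  have "has_boundary_values C f fm fm"
    using bv no_jump by (auto simp: has_boundary_values_def)
  then have holF: "F holomorphic_on UNIV"
    unfolding F_def using holf tendsto_at_poles[OF per_1 per_\<tau> lim]
    by (intro holomorphic_extension_across_cuts_and_poles)
  have "of_real (D + 1/2) \<in> - C - poles"
    using not_Ints_between[of 0 "1/2"] not_Ints_between[of "- 1" "- 1/2"]
    by (simp add: mem_C_iff mem_poles_iff)
  then have nonempty: "- C - poles \<noteq> {}"
    by blast
  have periodic: "F (z + a) = F z" if a: "a \<in> lattice \<tau>" for z a
  proof (rule analytic_continuation_open[where f = "\<lambda>z. F (z + a)" and g = F,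
        OF open_off_cuts_and_poles open_UNIV nonempty])
    have "(F \<circ> (\<lambda>z. z + a)) holomorphic_on UNIV"
      by (intro holomorphic_on_compose holomorphic_intros holomorphic_on_subset[OF holF]) auto
    then show "(\<lambda>z. F (z + a)) holomorphic_on UNIV"
      by (simp add: o_def)
    show "F (q + a) = F q" if "q \<in> - C - poles" for q
      using that off lattice_translate_iff[OF a] lattice_periodic[where f = f, OF per_1 per_\<tau> a] by auto
  qed (use holF in auto)
  have "F constant_on UNIV"
    using Im_tau_pos periodic[OF one_in_lattice] periodic[OF tau_in_lattice]
    by (intro entire_doubly_periodic_imp_constant[OF holF, of \<tau>]) auto
  then obtain k where "\<And>p. F p = k"
    by (auto simp: constant_on_def)
  then show thesis
    using off that by metis
qed

lemma vanishes_near_cut_if_boundary_values_vanish: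
  fixes f fp fm :: "complex \<Rightarrow> complex"
  assumes holf: "f holomorphic_on - C - poles" and bv: "has_boundary_values C f fp fm"
    and x: "x \<in> C" and zero: "\<And>y. y \<in> C \<Longrightarrow> Im y = Im x \<Longrightarrow> fp y = 0 \<and> fm y = 0"
    and q: "q \<in> ball x (h/2)" "q \<notin> C"
  shows "f q = 0"
proof -
  let ?F = "\<lambda>q. if q \<in> C then 0 else f q"
  have holF: "?F holomorphic_on ball x (h/2)"
    using bv zero by (intro holomorphic_on_ball_across_cut[OF holf x]) (auto simp: has_boundary_values_def)
  define U where "U = {y \<in> ball x (h/2). Im y = Im x}"
  have "x islimpt U"
    unfolding islimpt_approachable
  proof (intro allI impI)
    fix e :: real
    assume "e > 0"
    then show "\<exists>y\<in>U. y \<noteq> x \<and> dist y x < e"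
      using Im_tau_pos by (intro bexI[of _ "x + of_real (min e (h/2) / 2)"]) (auto simp: U_def dist_norm)
  qed
  have "?F q = 0"
  proof (rule analytic_continuation[OF holF open_ball convex_connected[OF convex_ball] _ _ \<open>x islimpt U\<close>])
    show "?F y = 0" if "y \<in> U" for y
      using that ball_around_cut(2)[OF x] by (auto simp: U_def)
  qed (use q Im_tau_pos in \<open>auto simp: U_def\<close>)
  then show ?thesis
    using q by simp
qed

definition cell :: "complex set" where
  "cell = box (Complex (D - 1) (- (h/2))) (Complex D (h/2))"

lemma cell_off_cuts_and_poles: "cell \<subseteq> - C - poles"
proof
  fix q
  assume "q \<in> cell"
  then have re: "D - 1 < Re q" "Re q < D" and im: "- (h/2) < Im q" "Im q < h/2"
    by (simp_all add: cell_def in_box_complex_iff)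
  have "Re q - D \<notin> \<int>"
    using not_Ints_between[of "- 1" "Re q - D"] re by simp
  then show "q \<in> - C - poles"
    using not_cut_if_Im_between[OF im] by (simp add: mem_poles_iff)
qed

lemma boundary_values_at_cell_edge:
  fixes g gp gm :: "complex \<Rightarrow> complex"
  assumes const: "\<And>q. q \<in> cell \<Longrightarrow> g q = a" and per_\<tau>: "\<And>p. p \<notin> C \<Longrightarrow> g (p + \<tau>) = g p"
    and bv: "has_boundary_values C g gp gm"
  defines "x0 \<equiv> Complex (D - 1/2) (h/2)"
  shows "x0 \<in> C" and "gp x0 = a" and "gm x0 = a"
proof -
  \<comment> \<open>\<open>x0\<close> is the midpoint of the top edge of the cell: points just below it lie in the cell,
    points just above it are \<open>\<tau>\<close>-translates of points of the cell.\<close>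
  show x0: "x0 \<in> C"
    using Im_tau_pos by (simp add: x0_def mem_C_iff)
  define \<delta> where "\<delta> = min (1/2) (h/2)"
  have \<delta>: "\<delta> > 0" "\<delta> \<le> 1/2" "\<delta> \<le> h/2"
    using Im_tau_pos by (auto simp: \<delta>_def)
  have near: "D - 1 < Re q \<and> Re q < D \<and> 0 < Im q \<and> Im q < h" if "q \<in> ball x0 \<delta>" for q
    using mem_ball_abs_Re_Im_less[OF that] \<delta> by (simp add: x0_def) arith
  have "eventually (\<lambda>q. g q = a) (at x0 within {q. Im q < Im x0})"
    using eventually_at_ball[OF \<delta>(1), of x0 "{q. Im q < Im x0}"]
  proof eventually_elim
    case (elim q)
    then have "q \<in> cell"
      using near[of q] by (auto simp: cell_def in_box_complex_iff x0_def)
    then show ?case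
      by (rule const)
  qed
  then show "gm x0 = a"
    by (rule has_boundary_values_eqI(2)[OF bv x0])
  have "eventually (\<lambda>q. g q = a) (at x0 within {q. Im q > Im x0})"
    using eventually_at_ball[OF \<delta>(1), of x0 "{q. Im q > Im x0}"]
  proof eventually_elim
    case (elim q)
    then have "q - \<tau> \<in> cell"
      using near[of q] Re_tau by (auto simp: cell_def in_box_complex_iff x0_def)
    then have "g (q - \<tau> + \<tau>) = g (q - \<tau>)"
      using per_\<tau> cell_off_cuts_and_poles by blast
    then show ?case
      using const[OF \<open>q - \<tau> \<in> cell\<close>] by simp
  qed
  then show "gp x0 = a"
    by (rule has_boundary_values_eqI(1)[OF bv x0])
qed

lemma power_constant_if_jump_root_of_unity:
  fixes g gp gm :: "complex \<Rightarrow> complex"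
  assumes holg: "g holomorphic_on - C - poles"
    and per_1: "\<And>p. p \<notin> C \<Longrightarrow> g (p + 1) = \<epsilon> * g p" and per_\<tau>: "\<And>p. p \<notin> C \<Longrightarrow> g (p + \<tau>) = g p"
    and lim: "(g \<longlongrightarrow> l) (at (of_real D))"
    and bv: "has_boundary_values C g gp gm" and jump: "\<And>x. x \<in> C \<Longrightarrow> gp x = c * gm x"
    and \<epsilon>: "\<epsilon> ^ m = 1" and c: "c ^ m = 1"
  obtains k where "\<And>q. q \<notin> C \<Longrightarrow> q \<notin> poles \<Longrightarrow> g q ^ m = k"
proof (rule constant_if_periodic_without_jump)
  show "(\<lambda>q. g q ^ m) holomorphic_on - C - poles"
    using holg by (intro holomorphic_intros)
  show "g (q + 1) ^ m = g q ^ m" "g (q + \<tau>) ^ m = g q ^ m" if "q \<notin> C" for q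
    using per_1[OF that] per_\<tau>[OF that] \<epsilon> by (simp_all add: power_mult_distrib)
  show "((\<lambda>q. g q ^ m) \<longlongrightarrow> l ^ m) (at (of_real D))"
    using lim by (intro tendsto_intros)
  show "has_boundary_values C (\<lambda>q. g q ^ m) (\<lambda>x. gp x ^ m) (\<lambda>x. gm x ^ m)"
    using bv by (rule has_boundary_values_power)
  show "gp x ^ m = gm x ^ m" if "x \<in> C" for x
    using jump[OF that] c by (simp add: power_mult_distrib)
qed (use that in blast)

lemma vanishes_if_jump_root_of_unity:
  fixes g gp gm :: "complex \<Rightarrow> complex"
  assumes holg: "g holomorphic_on - C - poles"
    and per_1: "\<And>p. p \<notin> C \<Longrightarrow> g (p + 1) = \<epsilon> * g p" and per_\<tau>: "\<And>p. p \<notin> C \<Longrightarrow> g (p + \<tau>) = g p"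
    and lim: "(g \<longlongrightarrow> l) (at (of_real D))"
    and bv: "has_boundary_values C g gp gm" and jump: "\<And>x. x \<in> C \<Longrightarrow> gp x = c * gm x"
    and m: "0 < m" "\<epsilon> ^ m = 1" "c ^ m = 1" and c: "c \<noteq> 1"
    and p: "p \<notin> C" "p \<notin> poles"
  shows "g p = 0"
proof -
  obtain k where k: "\<And>q. q \<notin> C \<Longrightarrow> q \<notin> poles \<Longrightarrow> g q ^ m = k"
    using power_constant_if_jump_root_of_unity[OF holg per_1 per_\<tau> lim bv jump m(2,3)] by blast
  have "g constant_on cell"
  proof (rule continuous_finite_range_constant)
    show "connected cell"
      by (simp add: cell_def convex_connected)
    show "continuous_on cell g"
      using holomorphic_on_imp_continuous_on[OF holg] cell_off_cuts_and_poles by (rule continuous_on_subset)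
    have "g ` cell \<subseteq> {z. z ^ m = k}"
      using k cell_off_cuts_and_poles by auto
    then show "finite (g ` cell)"
      using finite_nth_roots[OF m(1)] finite_subset by blast
  qed
  then obtain a where a: "\<And>q. q \<in> cell \<Longrightarrow> g q = a"
    by (auto simp: constant_on_def)
  have "a = c * a"
    using boundary_values_at_cell_edge[OF a per_\<tau> bv] jump by metis
  then have "a = 0"
    using c by simp
  have "of_real (D - 1/2) \<in> cell"
    using Im_tau_pos by (simp add: cell_def in_box_complex_iff)
  then have "k = 0"
    using k a cell_off_cuts_and_poles \<open>a = 0\<close> m(1) by force
  then show ?thesis
    using k[OF p] by simp
qed

lemma vanishes_on_strip_if_eventually_zero:
  fixes v :: "complex \<Rightarrow> complex"
  assumes holv: "v holomorphic_on - C" and zero: "eventually (\<lambda>q. v q = 0) (at (of_real D))"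
    and q: "- (h/2) < Im q" "Im q < h/2"
  shows "v q = 0"
proof -
  define S where "S = {q. - (h/2) < Im q \<and> Im q < h/2}"
  have S_off: "S \<subseteq> - C"
    using not_cut_if_Im_between by (auto simp: S_def)
  have open_S: "open S"
    unfolding S_def by (intro open_Collect_conj open_Collect_less continuous_intros)
  have "S = {q. \<i> \<bullet> q > - (h/2)} \<inter> {q. \<i> \<bullet> q < h/2}"
    by (auto simp: S_def inner_complex_def)
  then have "convex S"
    by (metis convex_Int convex_halfspace_lt convex_halfspace_gt)
  then have connected_S: "connected S"
    by (rule convex_connected)
  have d: "of_real D \<in> S"
    using Im_tau_pos by (simp add: S_def)
  have "eventually (\<lambda>q. q \<in> {q \<in> S. v q = 0}) (at (of_real D))"
    using zero eventually_at_in_open'[OF open_S d] by eventually_elim simp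
  then have limpt: "of_real D islimpt {q \<in> S. v q = 0}"
    by (simp add: islimpt_conv_frequently_at eventually_frequently)
  show ?thesis
    by (rule analytic_continuation[OF holomorphic_on_subset[OF holv S_off] open_S connected_S _ d limpt])
      (use q in \<open>auto simp: S_def\<close>)
qed

lemma boundary_values_vanish_on_cut_if_eventually_zero:
  fixes v vp vm :: "complex \<Rightarrow> complex"
  assumes holv: "v holomorphic_on - C" and per_\<tau>: "\<And>p. p \<notin> C \<Longrightarrow> v (p + \<tau>) = v p"
    and bv: "has_boundary_values C v vp vm"
    and zero: "eventually (\<lambda>q. v q = 0) (at (of_real D))"
    and x: "Im x = h/2"
  shows "vp x = 0" and "vm x = 0"
proof -
  have x_cut: "x \<in> C"
    unfolding mem_C_iff x using Im_tau_pos by simp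
  have near: "0 < Im q \<and> Im q < h" if "q \<in> ball x (h/2)" for q
    using mem_ball_abs_Re_Im_less(2)[OF that] x by arith
  have half_h_pos: "0 < h/2"
    using Im_tau_pos by simp
  have "eventually (\<lambda>q. v q = 0) (at x within {q. Im q < Im x})"
    using eventually_at_ball[OF half_h_pos, of x "{q. Im q < Im x}"]
  proof eventually_elim
    case (elim q)
    then show ?case
      using near[of q] x by (intro vanishes_on_strip_if_eventually_zero[OF holv zero]) auto
  qed
  then show "vm x = 0"
    by (rule has_boundary_values_eqI(2)[OF bv x_cut])
  have "eventually (\<lambda>q. v q = 0) (at x within {q. Im q > Im x})"
    using eventually_at_ball[OF half_h_pos, of x "{q. Im q > Im x}"]
  proof eventually_elim
    case (elim q)
    then have "- (h/2) < Im (q - \<tau>)" "Im (q - \<tau>) < h/2"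
      using near[of q] x by auto
    then have "v (q - \<tau>) = 0" "q - \<tau> \<notin> C"
      using vanishes_on_strip_if_eventually_zero[OF holv zero] not_cut_if_Im_between by auto
    then show ?case
      using per_\<tau>[of "q - \<tau>"] by simp
  qed
  then show "vp x = 0"
    by (rule has_boundary_values_eqI(1)[OF bv x_cut])
qed

lemma frequently_zero_at_pole_if_boundary_values_vanish:
  fixes u up um :: "complex \<Rightarrow> complex"
  assumes holu: "u holomorphic_on - C - poles" and bv: "has_boundary_values C u up um"
    and zero: "\<And>y. y \<in> C \<Longrightarrow> Im y = h/2 \<Longrightarrow> up y = 0 \<and> um y = 0"
  shows "frequently (\<lambda>q. u q = 0) (at (of_real D))"
proof -
  \<comment> \<open>The disc of radius \<open>h/4\<close> around \<open>x2\<close> lies between \<open>D\<close> and the cut through \<open>x1\<close>,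
    and \<open>D\<close> is on its boundary.\<close>
  define x2 where "x2 = of_real D + \<i> * of_real (h/4)"
  define x1 where "x1 = x2 + \<i> * of_real (h/4)"
  have x1: "x1 \<in> C"
    using Im_tau_pos by (simp add: x1_def x2_def mem_C_iff)
  have u_zero: "u q = 0" if q: "q \<in> ball x2 (h/4)" for q
  proof (rule vanishes_near_cut_if_boundary_values_vanish[OF holu bv x1])
    show "up y = 0 \<and> um y = 0" if "y \<in> C" "Im y = Im x1" for y
      using zero that by (simp add: x1_def x2_def)
    have "dist x1 x2 = h/4"
      using Im_tau_pos by (simp add: x1_def dist_norm norm_mult)
    then show "q \<in> ball x1 (h/2)"
      using q dist_triangle[of x1 q x2] by simp
    have "\<bar>Im q - h/4\<bar> < h/4"
      using mem_ball_abs_Re_Im_less(2)[OF q] by (simp add: x2_def)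
    then show "q \<notin> C"
      by (intro not_cut_if_Im_between) arith+
  qed
  have "of_real D islimpt ball x2 (h/4)"
    using Im_tau_pos by (simp add: islimpt_ball x2_def dist_norm norm_mult)
  then show ?thesis
    unfolding islimpt_conv_frequently_at by (rule frequently_elim1) (rule u_zero)
qed

end

locale model_problem_row = cut_lattice +
  fixes u v up um vp vm :: "complex \<Rightarrow> complex" and s :: complex
  assumes hol_u: "u holomorphic_on - C - poles" and hol_v: "v holomorphic_on - C"
    and sign: "s\<^sup>2 = 1"
    and per_u: "\<And>p. p \<notin> C \<Longrightarrow> u (p + 1) = s * u p" "\<And>p. p \<notin> C \<Longrightarrow> u (p + \<tau>) = u p"
    and per_v: "\<And>p. p \<notin> C \<Longrightarrow> v (p + 1) = s * v p" "\<And>p. p \<notin> C \<Longrightarrow> v (p + \<tau>) = v p"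
    and pole_u: "u \<in> O[at (of_real D)](\<lambda>q. 1 / (q - of_real D))"
    and zero_v: "v \<in> O[at (of_real D)](\<lambda>q. q - of_real D)"
    and bv_u: "has_boundary_values C u up um" and bv_v: "has_boundary_values C v vp vm"
    and jump: "\<And>x. x \<in> C \<Longrightarrow> up x = - vm x \<and> vp x = um x"
begin

lemma D_in_poles: "complex_of_real D \<in> poles"
  by (simp add: mem_poles_iff)

lemma punctured_ball_at_D: "ball (of_real D) (min 1 h / 2) - {of_real D} \<subseteq> - C - poles"
  by (rule poles_isolated(2)[OF D_in_poles])

lemma hol_v_off_poles: "v holomorphic_on - C - poles"
  using hol_v by (rule holomorphic_on_subset) auto

lemma product_vanishes:
  assumes "q \<notin> C" "q \<notin> poles"
  shows "u q * v q = 0"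
proof -
  let ?d = "complex_of_real D"
  have "(\<lambda>q. u q * v q) \<in> O[at ?d](\<lambda>q. 1 / (q - ?d) * (q - ?d))"
    using pole_u zero_v by (rule landau_o.big_mult)
  also have "O[at ?d](\<lambda>q. 1 / (q - ?d) * (q - ?d)) = O[at ?d](\<lambda>_. 1)"
    by (intro landau_o.big.cong) (auto simp: eventually_at_filter)
  finally have bounded: "(\<lambda>q. u q * v q) \<in> O[at ?d](\<lambda>_. 1)" .
  have "(\<lambda>q. u q * v q) holomorphic_on ball ?d (min 1 h / 2) - {?d}"
    using holomorphic_on_subset[OF hol_u punctured_ball_at_D]
      holomorphic_on_subset[OF hol_v_off_poles punctured_ball_at_D]
    by (intro holomorphic_intros)
  then obtain l where lim: "((\<lambda>q. u q * v q) \<longlongrightarrow> l) (at ?d)"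
    using Im_tau_pos bounded by (elim tendsto_if_bigo_1_at_isolated_singularity) auto
  show ?thesis
  proof (rule vanishes_if_jump_root_of_unity[where g = "\<lambda>q. u q * v q"
        and gp = "\<lambda>x. up x * vp x" and gm = "\<lambda>x. um x * vm x" and m = 2 and \<epsilon> = 1 and c = "- 1",
        OF _ _ _ lim _ _ _ _ _ _ assms])
    show "(\<lambda>q. u q * v q) holomorphic_on - C - poles"
      using hol_u hol_v_off_poles by (intro holomorphic_intros)
    show "u (q + 1) * v (q + 1) = 1 * (u q * v q)" "u (q + \<tau>) * v (q + \<tau>) = u q * v q"
      if "q \<notin> C" for q
      using per_u[OF that] per_v[OF that] sign by (simp_all add: algebra_simps power2_eq_square)
    show "has_boundary_values C (\<lambda>q. u q * v q) (\<lambda>x. up x * vp x) (\<lambda>x. um x * vm x)"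
      using bv_u bv_v by (rule has_boundary_values_mult)
    show "up x * vp x = - 1 * (um x * vm x)" if "x \<in> C" for x
      using jump[OF that] by simp
  qed simp_all
qed

lemma not_pole_at_D: "\<not> is_pole u (of_real D)"
proof
  let ?d = "complex_of_real D"
  assume pole: "is_pole u ?d"
  have "eventually (\<lambda>q. q \<in> ball ?d (min 1 h / 2) - {?d}) (at ?d)"
    using Im_tau_pos by (intro eventually_at_in_open) auto
  then have "eventually (\<lambda>q. q \<notin> C \<and> q \<notin> poles) (at ?d)"
    using punctured_ball_at_D by (auto elim!: eventually_mono)
  then have "eventually (\<lambda>q. v q = 0) (at ?d)"
    using non_zero_neighbour_pole[OF pole] by eventually_elim (use product_vanishes in force)
  then have "vp y = 0 \<and> vm y = 0" if "Im y = h/2" for y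
    using boundary_values_vanish_on_cut_if_eventually_zero[OF hol_v per_v(2) bv_v _ that] by blast
  then have "up y = 0 \<and> um y = 0" if "y \<in> C" "Im y = h/2" for y
    using jump[OF that(1)] that(2) by force
  then have "frequently (\<lambda>q. u q = 0) (at ?d)"
    by (rule frequently_zero_at_pole_if_boundary_values_vanish[OF hol_u bv_u])
  then show False
    using frequently_const_imp_not_is_pole pole by blast
qed

lemma tendsto_at_D: obtains l where "(u \<longlongrightarrow> l) (at (of_real D))"
proof -
  have "not_essential u (of_real D)"
    by (rule not_essential_if_bigo_inverse[OF holomorphic_on_subset[OF hol_u punctured_ball_at_D] _ pole_u])
      (use Im_tau_pos in simp)
  then show thesis
    using not_pole_at_D that by (auto simp: not_essential_def)
qed

lemma combination_vanishes:
  assumes c: "c\<^sup>2 = - 1" and p: "p \<notin> C" "p \<notin> poles"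
  shows "u p + c * v p = 0"
proof -
  obtain lu where lim_u: "(u \<longlongrightarrow> lu) (at (of_real D))"
    using tendsto_at_D .
  have "isCont v (of_real D)"
    using holomorphic_on_imp_continuous_on[OF hol_v] closed_C poles_isolated(1)[OF D_in_poles]
    by (simp add: continuous_on_eq_continuous_at open_Compl)
  then have lim_v: "(v \<longlongrightarrow> v (of_real D)) (at (of_real D))"
    by (simp add: isCont_def)
  have square: "c * (c * z) = - z" for z
    using c by (simp add: power2_eq_square flip: mult.assoc)
  show ?thesis
  proof (rule vanishes_if_jump_root_of_unity[where g = "\<lambda>q. u q + c * v q"
        and gp = "\<lambda>x. up x + c * vp x" and gm = "\<lambda>x. um x + c * vm x" and m = 4 and \<epsilon> = s and c = c,
        OF _ _ _ _ _ _ _ _ _ _ p])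
    show "(\<lambda>q. u q + c * v q) holomorphic_on - C - poles"
      using hol_u hol_v_off_poles by (intro holomorphic_intros)
    show "u (q + 1) + c * v (q + 1) = s * (u q + c * v q)" "u (q + \<tau>) + c * v (q + \<tau>) = u q + c * v q"
      if "q \<notin> C" for q
      using per_u[OF that] per_v[OF that] by (simp_all add: algebra_simps)
    show "((\<lambda>q. u q + c * v q) \<longlongrightarrow> lu + c * v (of_real D)) (at (of_real D))"
      using lim_u lim_v by (intro tendsto_intros)
    show "has_boundary_values C (\<lambda>q. u q + c * v q) (\<lambda>x. up x + c * vp x) (\<lambda>x. um x + c * vm x)"
      using bv_u bv_v by (intro has_boundary_values_add has_boundary_values_mult has_boundary_values_const)
    show "up x + c * vp x = c * (um x + c * vm x)" if "x \<in> C" for x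
    proof -
      have "c * (um x + c * vm x) = c * um x - vm x"
        by (simp add: distrib_left square)
      then show ?thesis
        using jump[OF that] by simp
    qed
    show "s ^ 4 = 1" "c ^ 4 = 1"
      using sign c by (simp_all add: power4_eq_xxxx power2_eq_square)
    show "c \<noteq> 1"
      using c by auto
  qed simp
qed

lemma row_vanishes:
  assumes "p \<notin> C" "p \<notin> poles"
  shows "u p = 0" and "v p = 0"
proof -
  have plus: "u p + \<i> * v p = 0" and minus: "u p + - \<i> * v p = 0"
    using combination_vanishes[of \<i>, OF _ assms] combination_vanishes[of "- \<i>", OF _ assms] by simp_all
  have "2 * u p = (u p + \<i> * v p) + (u p + - \<i> * v p)"
    by simp
  then show "u p = 0"
    using plus minus by simp
  then show "v p = 0"
    using plus by simp
qed

end

lemma matrix_mult_Jmat: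
  fixes A :: "complex ^2 ^2"
  shows "(A ** Jmat) $ i $ 1 = - A $ i $ 2" and "(A ** Jmat) $ i $ 2 = A $ i $ 1"
  by (simp_all add: matrix_matrix_mult_def Jmat_def sum_2)

context cut_lattice
begin

lemma matrix_vanishes:
  fixes M Mp Mm :: "complex \<Rightarrow> complex ^2 ^2" and r :: real
  assumes sign: "r\<^sup>2 = 1"
    and per_1: "\<And>p. p \<notin> C \<Longrightarrow> M (p + 1) = r *\<^sub>R M p" and per_\<tau>: "\<And>p. p \<notin> C \<Longrightarrow> M (p + \<tau>) = M p"
    and hol_1: "\<And>i. (\<lambda>p. M p $ i $ 1) holomorphic_on - C - poles"
    and hol_2: "\<And>i. (\<lambda>p. M p $ i $ 2) holomorphic_on - C"
    and pole_1: "\<And>i. (\<lambda>p. M p $ i $ 1) \<in> O[at (of_real D)](\<lambda>q. 1 / (q - of_real D))"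
    and zero_2: "\<And>i. (\<lambda>p. M p $ i $ 2) \<in> O[at (of_real D)](\<lambda>q. q - of_real D)"
    and bv: "has_boundary_values C M Mp Mm" and jump: "\<And>x. x \<in> C \<Longrightarrow> Mp x = Mm x ** Jmat"
    and p: "p \<notin> C" "p \<notin> poles"
  shows "M p = 0"
proof -
  have sign': "(of_real r)\<^sup>2 = (1 :: complex)"
    using sign by (metis of_real_eq_1_iff of_real_power)
  have per_entry: "M (q + 1) $ i $ j = of_real r * M q $ i $ j" if "q \<notin> C" for q i j
  proof -
    have "M (q + 1) $ i $ j = r *\<^sub>R M q $ i $ j"
      using per_1[OF that] by simp
    then show ?thesis
      by (simp add: scaleR_conv_of_real)
  qed
  have jump_entry: "Mp x $ i $ 1 = - Mm x $ i $ 2 \<and> Mp x $ i $ 2 = Mm x $ i $ 1" if "x \<in> C" for x i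
    using jump[OF that] by (simp add: matrix_mult_Jmat)
  have "M p $ i $ 1 = 0 \<and> M p $ i $ 2 = 0" for i
  proof -
    interpret model_problem_row \<tau> D "\<lambda>q. M q $ i $ 1" "\<lambda>q. M q $ i $ 2"
      "\<lambda>x. Mp x $ i $ 1" "\<lambda>x. Mm x $ i $ 1" "\<lambda>x. Mp x $ i $ 2" "\<lambda>x. Mm x $ i $ 2" "of_real r"
      by unfold_locales (use hol_1 hol_2 sign' per_entry per_\<tau> pole_1 zero_2 jump_entry
          has_boundary_values_matrix_entry[OF bv] in auto)
    show ?thesis
      using row_vanishes[OF p] by simp
  qed
  then show ?thesis
    by (simp add: vec_eq_iff forall_2)
qed

end

theorem corollary3p10:
  fixes n :: nat and \<tau> :: complex and D :: real and M :: "complex \<Rightarrow> complex^2^2"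
  assumes n: "n \<ge> 1"
    and tau: "Re \<tau> = 0" "Im \<tau> > 0"
    and D: "0 < D" "D < 1"
    and per1: "\<And>p. p \<notin> cuts \<tau> \<Longrightarrow> M (p + 1) = ((-1::real) ^ (n - 1)) *\<^sub>R M p"
    and pertau: "\<And>p. p \<notin> cuts \<tau> \<Longrightarrow> M (p + \<tau>) = M p"
    and hol: "\<And>i j. (\<lambda>p. M p $ i $ j) holomorphic_on
               (- cuts \<tau> - (\<lambda>w. complex_of_real D + w) ` lattice \<tau>)"
    and hol2: "\<And>i. (\<lambda>p. M p $ i $ 2) holomorphic_on (- cuts \<tau>)"
    and col1: "\<And>i w. w \<in> lattice \<tau> \<Longrightarrow>
               (\<lambda>p. M p $ i $ 1) \<in> O[at (complex_of_real D + w)](\<lambda>p. 1 / (p - (complex_of_real D + w)))"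
    and col2: "\<And>i w. w \<in> lattice \<tau> \<Longrightarrow>
               (\<lambda>p. M p $ i $ 2) \<in> O[at (complex_of_real D + w)](\<lambda>p. p - (complex_of_real D + w))"
    and bv: "\<exists>Mp Mm :: complex \<Rightarrow> complex^2^2.
               continuous_on (cuts \<tau>) Mp \<and> continuous_on (cuts \<tau>) Mm \<and>
               (\<forall>x \<in> cuts \<tau>. (M \<longlongrightarrow> Mp x) (at x within {p. Im p > Im x}) \<and>
                              (M \<longlongrightarrow> Mm x) (at x within {p. Im p < Im x}) \<and>
                              Mp x = Mm x ** Jmat)"
  shows "\<forall>p. p \<notin> cuts \<tau> \<and> p \<notin> (\<lambda>w. complex_of_real D + w) ` lattice \<tau> \<longrightarrow> M p = 0"
proof -
  interpret cut_lattice \<tau> D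
    using tau by unfold_locales
  obtain Mp Mm where bv_M: "has_boundary_values C M Mp Mm" and jump: "\<And>x. x \<in> C \<Longrightarrow> Mp x = Mm x ** Jmat"
    using bv unfolding has_boundary_values_def by blast
  have sign: "((-1::real) ^ (n - 1))\<^sup>2 = 1"
    by (simp flip: power_mult)
  have hol_1: "(\<lambda>p. M p $ i $ 1) holomorphic_on - C - poles" for i
    using hol by (simp add: poles_def)
  have pole_1: "(\<lambda>p. M p $ i $ 1) \<in> O[at (of_real D)](\<lambda>q. 1 / (q - of_real D))"
    and zero_2: "(\<lambda>p. M p $ i $ 2) \<in> O[at (of_real D)](\<lambda>q. q - of_real D)" for i
    using col1[OF zero_in_lattice] col2[OF zero_in_lattice] by simp_all
  show ?thesis
    using matrix_vanishes[OF sign per1 pertau hol_1 hol2 pole_1 zero_2 bv_M jump]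
    by (simp add: poles_def)
qed

end
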